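(* Consider any run of Algorithm 1 (described in the context) under the standing assumption. The number of unsuccessful iterations that occur before an $(\epsilon_g,\epsilon_H)$-stationary point is reached is either zero or else satisfies \[ |\mathcal{U}|\ \le\ \Big\lfloor 1+\log_{\gamma_1}\Big(\tfrac{3(1-\eta)}{L_H\delta_{\max}}\Big)+\log_{\gamma_1}(\epsilon_H)\Big\rfloor\,|\mathcal{S}|. \]
   Context: Let $f:\mathbb{R}^n\to\mathbb{R}$ with gradient $g=\nabla f$ and Hessian $H=\nabla^2 f$; $\|\cdot\|$ is the Euclidean norm and $\lambda_{\min}(\cdot)$ the smallest eigenvalue of a symmetric matrix. A point $x$ is $(\epsilon_g,\epsilon_H)$-stationary if $\|g(x)\|\le\epsilon_g$ and $\lambda_{\min}(H(x))\ge-\epsilon_H$. Write $f_k=f(x_k)$, $g_k=g(x_k)$, $H_k=H(x_k)$ and $m_k(x):=f_k+g_k^T(x-x_k)+\tfrac12(x-x_k)^TH_k(x-x_k)$. Algorithm 1 (exact trust-region Newton method). Inputs: tolerances $\epsilon_g,\epsilon_H>0$; parameters $\gamma_1\in(0,1)$, $\gamma_2\in[1,\infty)$, $\psi\in(1/\gamma_2,1]$; $x_0\in\mathbb{R}^n$; $\delta_0>0$; $\delta_{\max}\ge\delta_0$; $\eta\in(0,1)$. For $k=0,1,2,\dots$: evaluate $g_k,H_k$; if $\|g_k\|\le\epsilon_g$, compute $\lambda_k=\lambda_{\min}(H_k)$ and, if $\lambda_k\ge-\epsilon_H$, return $x_k$ (terminate). Otherwise compute $s_k$ as a global solution of $\min_{s}\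 m_k(x_k+s)+\tfrac12\epsilon_H\|s\|^2$ subject to $\|s\|\le\delta_k$. Set $\rho_k=\frac{f_k-f(x_k+s_k)}{m_k(x_k)-m_k(x_k+s_k)}$. If $\rho_k\ge\eta$: $x_{k+1}=x_k+s_k$, and $\delta_{k+1}=\min\{\gamma_2\delta_k,\delta_{\max}\}$ if $\|s_k\|\ge\psi\delta_k$, else $\delta_{k+1}=\delta_k$. If $\rho_k<\eta$: $x_{k+1}=x_k$ and $\delta_{k+1}=\gamma_1\|s_k\|$. $\mathcal{K}$ is the set of indices $k$ such that iteration $k$ is completed without termination; $\mathcal{S}=\{k\in\mathcal{K}:\rho_k\ge\eta\}$ (successful), $\mathcal{U}=\{k\in\mathcal{K}:\rho_k<\eta\}$ (unsuccessful). Standing assumption: the sequence $\{f_k\}$ is bounded below by some $f_{\rm low}\in\mathbb{R}$, and all segments $[x_k,x_k+s_k]$ lie in an open set on which $f$ is twice continuously differentiable with gradient Lipschitz continuous with constant $L_g>0$ and Hessian Lipschitz continuous with constant $L_H>0$. *)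

theory Defs
  imports "HOL-Analysis.Analysis"
begin

text \<open>Smallest eigenvalue of a (symmetric) real square matrix: the infimum of its
  real eigenvalues (for symmetric matrices all eigenvalues are real and this is the minimum).\<close>
definition lambda_min :: "real^'n^'n \<Rightarrow> real" where
  "lambda_min A = Inf {l. \<exists>v. v \<noteq> 0 \<and> A *v v = l *\<^sub>R v}"

definition tr_model ::
  "(real^'n \<Rightarrow> real) \<Rightarrow> (real^'n \<Rightarrow> real^'n) \<Rightarrow> (real^'n \<Rightarrow> real^'n^'n)
     \<Rightarrow> real^'n \<Rightarrow> real^'n \<Rightarrow> real" where
  "tr_model f g H xk x = f xk + g xk \<bullet> (x - xk) + (1/2) * ((x - xk) \<bullet> (H xk *v (x - xk)))"

definition stationary ::
  "(real^'n \<Rightarrow> real^'n) \<Rightarrow> (real^'n \<Rightarrow> real^'n^'n) \<Rightarrow> real \<Rightarrow> real \<Rightarrow> real^'n \<Rightarrow> bool" where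
  "stationary g H eg eH x \<longleftrightarrow> norm (g x) \<le> eg \<and> lambda_min (H x) \<ge> - eH"

end

theory Submission
  imports Defs
begin

text \<open>
  Comparing the step s with the zero step shows that the regularised model predicts a decrease of at
  least eH/2 |s|^2, while the Lipschitz Hessian keeps the actual decrease within LH/6 |s|^3 of the
  predicted one. Hence every nonzero step with |s| <= 3 (1 - \<eta>) eH / LH is successful. A zero step
  with positive radius would make x_k stationary: g_k = 0 and H_k + eH I is positive semidefinite, and
  since the Hessian is symmetric it has an eigenvector, so lambda_min (H_k) >= -eH. Thus unsuccessful
  steps are longer than the threshold, yet each unsuccessful iteration shrinks the radius by \<gamma>1 and
  the radius never exceeds \<delta>max. A successful iteration therefore follows each unsuccessful one
  within floor (1 + log_\<gamma>1 (3 (1 - \<eta>) eH / (LH \<delta>max))) iterations, and charging every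
  unsuccessful iteration to that successful one gives the bound.
\<close>

lemma second_order_taylor_remainder_le:
  fixes \<phi> \<phi>' \<phi>'' :: "real \<Rightarrow> real"
  assumes d1: "\<And>t. 0 \<le> t \<Longrightarrow> t \<le> 1 \<Longrightarrow> (\<phi> has_real_derivative \<phi>' t) (at t)"
    and d2: "\<And>t. 0 \<le> t \<Longrightarrow> t \<le> 1 \<Longrightarrow> (\<phi>' has_real_derivative \<phi>'' t) (at t)"
    and lip: "\<And>t. 0 \<le> t \<Longrightarrow> t \<le> 1 \<Longrightarrow> \<phi>'' t - \<phi>'' 0 \<le> M * t"
  shows "\<phi> 1 - \<phi> 0 - \<phi>' 0 - \<phi>'' 0 / 2 \<le> M / 6"
proof -
  \<comment> \<open>Compare \<open>\<phi>\<close> with the cubic \<open>M t\<^sup>3 / 6\<close>: first \<open>v\<close>, then \<open>u\<close> is nondecreasing from 0.\<close>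
  define v where "v t = M * t^2 / 2 - (\<phi>' t - \<phi>' 0 - t * \<phi>'' 0)" for t
  define u where "u t = M * t^3 / 6 - (\<phi> t - \<phi> 0 - t * \<phi>' 0 - t^2 / 2 * \<phi>'' 0)" for t
  have v_deriv: "(v has_real_derivative M * t - (\<phi>'' t - \<phi>'' 0)) (at t)"
    if "0 \<le> t" "t \<le> 1" for t
    unfolding v_def by (rule derivative_eq_intros refl d2 that | simp)+
  have u_deriv: "(u has_real_derivative v t) (at t)" if "0 \<le> t" "t \<le> 1" for t
    unfolding u_def v_def by (rule derivative_eq_intros refl d1 that | simp add: algebra_simps)+
  have v_nonneg: "0 \<le> v t" if "0 \<le> t" "t \<le> 1" for t
  proof -
    have "v 0 \<le> v t"
    proof (rule DERIV_nonneg_imp_nondecreasing[OF that(1)])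
      fix y assume "0 \<le> y" "y \<le> t"
      then show "\<exists>v'. (v has_real_derivative v') (at y) \<and> 0 \<le> v'"
        using v_deriv lip that by (metis diff_ge_0_iff_ge order_trans)
    qed
    then show ?thesis by (simp add: v_def)
  qed
  have "u 0 \<le> u 1"
    by (rule DERIV_nonneg_imp_nondecreasing[of 0 1]) (use u_deriv v_nonneg in auto)
  then show ?thesis by (simp add: u_def algebra_simps)
qed

lemma abs_second_order_taylor_remainder_le:
  fixes \<phi> \<phi>' \<phi>'' :: "real \<Rightarrow> real"
  assumes d1: "\<And>t. 0 \<le> t \<Longrightarrow> t \<le> 1 \<Longrightarrow> (\<phi> has_real_derivative \<phi>' t) (at t)"
    and d2: "\<And>t. 0 \<le> t \<Longrightarrow> t \<le> 1 \<Longrightarrow> (\<phi>' has_real_derivative \<phi>'' t) (at t)"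
    and lip: "\<And>t. 0 \<le> t \<Longrightarrow> t \<le> 1 \<Longrightarrow> \<bar>\<phi>'' t - \<phi>'' 0\<bar> \<le> M * t"
  shows "\<bar>\<phi> 1 - \<phi> 0 - \<phi>' 0 - \<phi>'' 0 / 2\<bar> \<le> M / 6"
proof -
  have "\<phi> 1 - \<phi> 0 - \<phi>' 0 - \<phi>'' 0 / 2 \<le> M / 6"
    by (rule second_order_taylor_remainder_le[OF d1 d2]) (use lip in \<open>auto simp: abs_le_iff\<close>)
  moreover have "(- \<phi> 1) - (- \<phi> 0) - (- \<phi>' 0) - (- \<phi>'' 0) / 2 \<le> M / 6"
    by (rule second_order_taylor_remainder_le[of "\<lambda>t. - \<phi> t" "\<lambda>t. - \<phi>' t" "\<lambda>t. - \<phi>'' t"])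
      (use d1 d2 lip in \<open>auto intro: DERIV_minus simp: abs_le_iff\<close>)
  ultimately show ?thesis by linarith
qed

lemma has_real_derivative_along_line:
  fixes f :: "'a::real_normed_vector \<Rightarrow> real"
  assumes "(f has_derivative f') (at (y + t *\<^sub>R d))"
  shows "((\<lambda>t. f (y + t *\<^sub>R d)) has_real_derivative f' d) (at t)"
proof -
  have "((\<lambda>t. y + t *\<^sub>R d) has_derivative (\<lambda>h. h *\<^sub>R d)) (at t)"
    by (rule derivative_eq_intros refl | simp)+
  from has_derivative_compose[OF this assms]
  have "((\<lambda>t. f (y + t *\<^sub>R d)) has_derivative (\<lambda>h. f' (h *\<^sub>R d))) (at t)"
    by (simp add: o_def)
  moreover have "f' (h *\<^sub>R d) = f' d * h" for h
    using linear_cmul[OF has_derivative_linear[OF assms]] by simp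
  ultimately show ?thesis
    by (simp add: has_field_derivative_def)
qed

lemma add_scaleR_in_closed_segment:
  "0 \<le> t \<Longrightarrow> t \<le> 1 \<Longrightarrow> y + t *\<^sub>R d \<in> closed_segment y (y + d)"
  by (auto simp: in_segment algebra_simps intro!: exI[of _ t])

lemma abs_inner_matrix_vector_le:
  fixes A :: "real^'n^'n"
  shows "\<bar>(A *v d) \<bullet> w\<bar> \<le> onorm (\<lambda>v. A *v v) * norm d * norm w"
proof -
  have "\<bar>(A *v d) \<bullet> w\<bar> \<le> norm (A *v d) * norm w" by (rule Cauchy_Schwarz_ineq2)
  also have "\<dots> \<le> onorm (\<lambda>v. A *v v) * norm d * norm w"
    by (intro mult_right_mono onorm) auto
  finally show ?thesis .
qed

lemma hessian_lipschitz_taylor_bound: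
  fixes f :: "real^'n \<Rightarrow> real" and g :: "real^'n \<Rightarrow> real^'n" and H :: "real^'n \<Rightarrow> real^'n^'n"
  assumes seg: "closed_segment y (y + d) \<subseteq> D"
    and grad: "\<And>z. z \<in> D \<Longrightarrow> (f has_derivative (\<lambda>h. g z \<bullet> h)) (at z)"
    and hess: "\<And>z. z \<in> D \<Longrightarrow> (g has_derivative (\<lambda>h. H z *v h)) (at z)"
    and H_lip: "\<And>z w. z \<in> D \<Longrightarrow> w \<in> D \<Longrightarrow> onorm (\<lambda>v. (H z - H w) *v v) \<le> LH * norm (z - w)"
  shows "\<bar>f (y + d) - f y - g y \<bullet> d - 1/2 * (d \<bullet> (H y *v d))\<bar> \<le> LH / 6 * norm d ^ 3"
proof -
  have on_seg: "y + t *\<^sub>R d \<in> D" if "0 \<le> t" "t \<le> 1" for t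
    using seg add_scaleR_in_closed_segment[OF that] by blast
  have y: "y \<in> D" using on_seg[of 0] by simp
  define \<phi> where "\<phi> t = f (y + t *\<^sub>R d)" for t
  define \<phi>' where "\<phi>' t = g (y + t *\<^sub>R d) \<bullet> d" for t
  define \<phi>'' where "\<phi>'' t = (H (y + t *\<^sub>R d) *v d) \<bullet> d" for t
  have d1: "(\<phi> has_real_derivative \<phi>' t) (at t)" if "0 \<le> t" "t \<le> 1" for t
    unfolding \<phi>_def \<phi>'_def by (rule has_real_derivative_along_line[OF grad[OF on_seg[OF that]]])
  have d2: "(\<phi>' has_real_derivative \<phi>'' t) (at t)" if "0 \<le> t" "t \<le> 1" for t
    unfolding \<phi>'_def \<phi>''_def
    by (rule has_real_derivative_along_line[OF has_derivative_inner_left[OF hess[OF on_seg[OF that]]]])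
  have lip: "\<bar>\<phi>'' t - \<phi>'' 0\<bar> \<le> LH * norm d ^ 3 * t" if "0 \<le> t" "t \<le> 1" for t
  proof -
    have "\<phi>'' t - \<phi>'' 0 = ((H (y + t *\<^sub>R d) - H y) *v d) \<bullet> d"
      by (simp add: \<phi>''_def matrix_vector_mult_diff_rdistrib inner_diff_left)
    also have "\<bar>\<dots>\<bar> \<le> onorm (\<lambda>v. (H (y + t *\<^sub>R d) - H y) *v v) * norm d * norm d"
      by (rule abs_inner_matrix_vector_le)
    also have "\<dots> \<le> (LH * norm (y + t *\<^sub>R d - y)) * norm d * norm d"
      by (intro mult_right_mono H_lip on_seg that y) auto
    also have "\<dots> = LH * norm d ^ 3 * t" using that by (simp add: power3_eq_cube)
    finally show ?thesis .
  qed
  have "\<bar>\<phi> 1 - \<phi> 0 - \<phi>' 0 - \<phi>'' 0 / 2\<bar> \<le> LH * norm d ^ 3 / 6"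
    by (rule abs_second_order_taylor_remainder_le[OF d1 d2 lip])
  then show ?thesis by (simp add: \<phi>_def \<phi>'_def \<phi>''_def inner_commute)
qed

lemma gradient_taylor_remainder_bound:
  fixes g :: "real^'n \<Rightarrow> real^'n" and H :: "real^'n \<Rightarrow> real^'n^'n"
  assumes seg: "closed_segment y (y + d) \<subseteq> D"
    and hess: "\<And>z. z \<in> D \<Longrightarrow> (g has_derivative (\<lambda>h. H z *v h)) (at z)"
    and H_lip: "\<And>z w. z \<in> D \<Longrightarrow> w \<in> D \<Longrightarrow> onorm (\<lambda>v. (H z - H w) *v v) \<le> LH * norm (z - w)"
    and LH: "0 \<le> LH"
  shows "\<bar>(g (y + d) - g y - H y *v d) \<bullet> w\<bar> \<le> LH * norm d ^ 2 * norm w"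
proof -
  have on_seg: "y + t *\<^sub>R d \<in> D" if "0 \<le> t" "t \<le> 1" for t
    using seg add_scaleR_in_closed_segment[OF that] by blast
  have y: "y \<in> D" using on_seg[of 0] by simp
  have "\<forall>t. 0 \<le> t \<and> t \<le> 1 \<longrightarrow>
      ((\<lambda>t. g (y + t *\<^sub>R d) \<bullet> w) has_real_derivative (H (y + t *\<^sub>R d) *v d) \<bullet> w) (at t)"
    using has_real_derivative_along_line[OF has_derivative_inner_left[OF hess[OF on_seg]]] by blast
  then obtain \<xi> where \<xi>: "0 < \<xi>" "\<xi> < 1"
    and mvt: "g (y + 1 *\<^sub>R d) \<bullet> w - g (y + 0 *\<^sub>R d) \<bullet> w = (1 - 0) * ((H (y + \<xi> *\<^sub>R d) *v d) \<bullet> w)"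
    using MVT2[of 0 1 "\<lambda>t. g (y + t *\<^sub>R d) \<bullet> w" "\<lambda>t. (H (y + t *\<^sub>R d) *v d) \<bullet> w"] by auto
  have "(g (y + d) - g y - H y *v d) \<bullet> w = ((H (y + \<xi> *\<^sub>R d) - H y) *v d) \<bullet> w"
    using mvt by (simp add: inner_diff_left matrix_vector_mult_diff_rdistrib)
  also have "\<bar>\<dots>\<bar> \<le> onorm (\<lambda>v. (H (y + \<xi> *\<^sub>R d) - H y) *v v) * norm d * norm w"
    by (rule abs_inner_matrix_vector_le)
  also have "\<dots> \<le> (LH * norm (y + \<xi> *\<^sub>R d - y)) * norm d * norm w"
    using \<xi> by (intro mult_right_mono H_lip on_seg y) auto
  also have "\<dots> = LH * \<xi> * norm d ^ 2 * norm w" using \<xi> by (simp add: power2_eq_square)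
  also have "\<dots> \<le> LH * norm d ^ 2 * norm w"
    using LH \<xi> by (intro mult_right_mono) (auto intro: mult_left_le)
  finally show ?thesis .
qed

lemma second_difference_mean_value:
  fixes f :: "real^'n \<Rightarrow> real" and g :: "real^'n \<Rightarrow> real^'n"
  assumes in_D: "\<And>t. 0 \<le> t \<Longrightarrow> t \<le> 1 \<Longrightarrow> y + k + t *\<^sub>R h \<in> D \<and> y + t *\<^sub>R h \<in> D"
    and grad: "\<And>z. z \<in> D \<Longrightarrow> (f has_derivative (\<lambda>h. g z \<bullet> h)) (at z)"
  obtains \<xi> where "0 < \<xi>" "\<xi> < 1"
    and "f (y + k + h) - f (y + h) - f (y + k) + f y = (g (y + k + \<xi> *\<^sub>R h) - g (y + \<xi> *\<^sub>R h)) \<bullet> h"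
proof -
  define \<phi> where "\<phi> t = f (y + k + t *\<^sub>R h) - f (y + t *\<^sub>R h)" for t
  have "\<forall>t. 0 \<le> t \<and> t \<le> 1 \<longrightarrow>
      (\<phi> has_real_derivative g (y + k + t *\<^sub>R h) \<bullet> h - g (y + t *\<^sub>R h) \<bullet> h) (at t)"
  proof (intro allI impI)
    fix t :: real assume "0 \<le> t \<and> t \<le> 1"
    with in_D have "y + k + t *\<^sub>R h \<in> D" "y + t *\<^sub>R h \<in> D" by auto
    then show "(\<phi> has_real_derivative g (y + k + t *\<^sub>R h) \<bullet> h - g (y + t *\<^sub>R h) \<bullet> h) (at t)"
      unfolding \<phi>_def by (intro DERIV_diff has_real_derivative_along_line grad)
  qed
  then obtain \<xi> where "0 < \<xi>" "\<xi> < 1"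
    and "\<phi> 1 - \<phi> 0 = (1 - 0) * (g (y + k + \<xi> *\<^sub>R h) \<bullet> h - g (y + \<xi> *\<^sub>R h) \<bullet> h)"
    using MVT2[of 0 1 \<phi> "\<lambda>t. g (y + k + t *\<^sub>R h) \<bullet> h - g (y + t *\<^sub>R h) \<bullet> h"] by auto
  with that show ?thesis by (simp add: \<phi>_def inner_diff_left algebra_simps)
qed

lemma second_difference_bound:
  fixes f :: "real^'n \<Rightarrow> real" and g :: "real^'n \<Rightarrow> real^'n" and H :: "real^'n \<Rightarrow> real^'n^'n"
  assumes ball: "ball y r \<subseteq> D" and hk: "norm h + norm k < r"
    and grad: "\<And>z. z \<in> D \<Longrightarrow> (f has_derivative (\<lambda>h. g z \<bullet> h)) (at z)"
    and hess: "\<And>z. z \<in> D \<Longrightarrow> (g has_derivative (\<lambda>h. H z *v h)) (at z)"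
    and H_lip: "\<And>z w. z \<in> D \<Longrightarrow> w \<in> D \<Longrightarrow> onorm (\<lambda>v. (H z - H w) *v v) \<le> LH * norm (z - w)"
    and LH: "0 \<le> LH"
  shows "\<bar>f (y + h + k) - f (y + h) - f (y + k) + f y - (H y *v k) \<bullet> h\<bar>
           \<le> 2 * LH * (norm h + norm k)^2 * norm h"
proof -
  have seg: "closed_segment y (y + v) \<subseteq> D" if "norm v \<le> norm h + norm k" for v
  proof -
    have "0 < r" using that hk norm_ge_zero[of v] by linarith
    then have "closed_segment y (y + v) \<subseteq> ball y r"
      using that hk by (intro closed_segment_subset) (auto simp: dist_norm)
    then show ?thesis using ball by blast
  qed
  have short: "norm (t *\<^sub>R h) \<le> norm h + norm k" "norm (k + t *\<^sub>R h) \<le> norm h + norm k"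
    if "0 \<le> t" "t \<le> 1" for t
  proof -
    have "norm (t *\<^sub>R h) \<le> norm h" using that by (simp add: mult_left_le_one_le)
    then show "norm (t *\<^sub>R h) \<le> norm h + norm k" "norm (k + t *\<^sub>R h) \<le> norm h + norm k"
      using norm_triangle_ineq[of k "t *\<^sub>R h"] norm_ge_zero[of k] by linarith+
  qed
  have "y + k + t *\<^sub>R h \<in> D \<and> y + t *\<^sub>R h \<in> D" if "0 \<le> t" "t \<le> 1" for t
    using seg[OF short(2)[OF that]] seg[OF short(1)[OF that]] by (auto simp: add.assoc)
  then obtain \<xi> where \<xi>: "0 < \<xi>" "\<xi> < 1"
    and mvt: "f (y + k + h) - f (y + h) - f (y + k) + f y = (g (y + k + \<xi> *\<^sub>R h) - g (y + \<xi> *\<^sub>R h)) \<bullet> h"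
    using second_difference_mean_value grad by blast
  define d1 where "d1 = k + \<xi> *\<^sub>R h"
  define d2 where "d2 = \<xi> *\<^sub>R h"
  have d_short: "norm d1 \<le> norm h + norm k" "norm d2 \<le> norm h + norm k"
    using short \<xi> unfolding d1_def d2_def by auto
  have "f (y + h + k) - f (y + h) - f (y + k) + f y - (H y *v k) \<bullet> h
     = (g (y + d1) - g y - H y *v d1) \<bullet> h - (g (y + d2) - g y - H y *v d2) \<bullet> h"
    using mvt unfolding d1_def d2_def
    by (simp add: algebra_simps inner_diff_left inner_add_left matrix_vector_right_distrib)
  also have "\<bar>\<dots>\<bar> \<le> LH * norm d1 ^ 2 * norm h + LH * norm d2 ^ 2 * norm h"
    using gradient_taylor_remainder_bound[OF seg[OF d_short(1)] hess H_lip LH, of h]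
      gradient_taylor_remainder_bound[OF seg[OF d_short(2)] hess H_lip LH, of h]
    unfolding abs_le_iff by linarith
  also have "\<dots> \<le> LH * (norm h + norm k)^2 * norm h + LH * (norm h + norm k)^2 * norm h"
    using d_short LH by (intro add_mono mult_right_mono mult_left_mono power_mono) auto
  finally show ?thesis by (simp add: algebra_simps)
qed

lemma eq_0_if_abs_le_linear:
  fixes q C r :: real
  assumes "0 < r" and "\<And>t. 0 < t \<Longrightarrow> t < r \<Longrightarrow> \<bar>q\<bar> \<le> t * C"
  shows "q = 0"
proof -
  have "((\<lambda>t. t * C) \<longlongrightarrow> 0 * C) (at_right 0)"
    by (intro tendsto_intros)
  moreover have "\<forall>\<^sub>F t in at_right 0. \<bar>q\<bar> \<le> t * C"
    using assms unfolding eventually_at_right_field by blast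
  ultimately have "\<bar>q\<bar> \<le> 0 * C"
    by (rule tendsto_lowerbound) simp
  then show ?thesis by simp
qed

lemma hessian_symmetric:
  fixes f :: "real^'n \<Rightarrow> real" and g :: "real^'n \<Rightarrow> real^'n" and H :: "real^'n \<Rightarrow> real^'n^'n"
  assumes "open D" and "y \<in> D"
    and grad: "\<And>z. z \<in> D \<Longrightarrow> (f has_derivative (\<lambda>h. g z \<bullet> h)) (at z)"
    and hess: "\<And>z. z \<in> D \<Longrightarrow> (g has_derivative (\<lambda>h. H z *v h)) (at z)"
    and H_lip: "\<And>z w. z \<in> D \<Longrightarrow> w \<in> D \<Longrightarrow> onorm (\<lambda>v. (H z - H w) *v v) \<le> LH * norm (z - w)"
    and LH: "0 \<le> LH"
  shows "(H y *v a) \<bullet> b = a \<bullet> (H y *v b)"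
proof -
  obtain r where r: "0 < r" "ball y r \<subseteq> D" using assms(1,2) open_contains_ball by blast
  define Ca where "Ca = 2 * LH * (norm a + norm b)^2 * norm a"
  define Cb where "Cb = 2 * LH * (norm b + norm a)^2 * norm b"
  have "(H y *v b) \<bullet> a - (H y *v a) \<bullet> b = 0"
  proof (rule eq_0_if_abs_le_linear)
    show "0 < r / (norm a + norm b + 1)" using r by (simp add: add_nonneg_pos)
    fix t assume t: "0 < t" "t < r / (norm a + norm b + 1)"
    have "t * (norm a + norm b) \<le> t * (norm a + norm b + 1)" using t by simp
    also have "\<dots> < r"
      using t(2) pos_less_divide_eq[of "norm a + norm b + 1"] by (simp add: add_nonneg_pos)
    finally have small: "norm (t *\<^sub>R a) + norm (t *\<^sub>R b) < r" "norm (t *\<^sub>R b) + norm (t *\<^sub>R a) < r"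
      using t by (simp_all add: algebra_simps)
    \<comment> \<open>The second difference of \<open>f\<close> is symmetric in \<open>a\<close> and \<open>b\<close>, and approximates both sides.\<close>
    have ab: "\<bar>f (y + t *\<^sub>R a + t *\<^sub>R b) - f (y + t *\<^sub>R a) - f (y + t *\<^sub>R b) + f y - t\<^sup>2 * ((H y *v b) \<bullet> a)\<bar>
        \<le> t^3 * Ca"
      using second_difference_bound[OF r(2) small(1) grad hess H_lip LH]
      by (simp add: abs_of_pos[OF t(1)] Ca_def algebra_simps matrix_vector_mult_scaleR power2_eq_square power3_eq_cube)
    have ba: "\<bar>f (y + t *\<^sub>R b + t *\<^sub>R a) - f (y + t *\<^sub>R b) - f (y + t *\<^sub>R a) + f y - t\<^sup>2 * ((H y *v a) \<bullet> b)\<bar>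
        \<le> t^3 * Cb"
      using second_difference_bound[OF r(2) small(2) grad hess H_lip LH]
      by (simp add: abs_of_pos[OF t(1)] Cb_def algebra_simps matrix_vector_mult_scaleR power2_eq_square power3_eq_cube)
    have swap: "y + t *\<^sub>R b + t *\<^sub>R a = y + t *\<^sub>R a + t *\<^sub>R b" by (simp add: algebra_simps)
    have "t\<^sup>2 * \<bar>(H y *v b) \<bullet> a - (H y *v a) \<bullet> b\<bar> = \<bar>t\<^sup>2 * ((H y *v b) \<bullet> a) - t\<^sup>2 * ((H y *v a) \<bullet> b)\<bar>"
      by (simp add: abs_mult flip: right_diff_distrib)
    also have "\<dots> \<le> t^3 * Ca + t^3 * Cb"
      using ab ba unfolding swap abs_le_iff by linarith
    also have "\<dots> = t\<^sup>2 * (t * (Ca + Cb))"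
      by (simp add: power2_eq_square power3_eq_cube distrib_left mult.assoc)
    finally have "t\<^sup>2 * \<bar>(H y *v b) \<bullet> a - (H y *v a) \<bullet> b\<bar> \<le> t\<^sup>2 * (t * (Ca + Cb))" .
    then show "\<bar>(H y *v b) \<bullet> a - (H y *v a) \<bullet> b\<bar> \<le> t * (Ca + Cb)"
      using t by simp
  qed
  then show ?thesis by (simp add: inner_commute)
qed

lemma symmetric_matrix_has_eigenvector:
  fixes A :: "real^'n^'n"
  assumes sym: "\<And>a b. (A *v a) \<bullet> b = a \<bullet> (A *v b)"
  shows "\<exists>v l. v \<noteq> 0 \<and> A *v v = l *\<^sub>R v"
proof -
  have "continuous_on (sphere 0 1) (\<lambda>v. v \<bullet> (A *v v))"
    by (intro continuous_intros)
  moreover have "sphere (0::real^'n) 1 \<noteq> {}" by simp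
  ultimately obtain v where "v \<in> sphere 0 1"
    and v_min: "\<And>u. u \<in> sphere 0 1 \<Longrightarrow> v \<bullet> (A *v v) \<le> u \<bullet> (A *v u)"
    using continuous_attains_inf[OF compact_sphere] by blast
  then have v: "norm v = 1" by simp
  define \<mu> where "\<mu> = v \<bullet> (A *v v)"
  have rayleigh: "\<mu> * (w \<bullet> w) \<le> w \<bullet> (A *v w)" for w
  proof (cases "w = 0")
    case False
    have "\<mu> \<le> (w /\<^sub>R norm w) \<bullet> (A *v (w /\<^sub>R norm w))"
      unfolding \<mu>_def using False by (intro v_min) auto
    also have "\<dots> = (w \<bullet> (A *v w)) / (w \<bullet> w)"
      by (simp add: matrix_vector_mult_scaleR field_simps power2_eq_square flip: power2_norm_eq_inner)
    finally show ?thesis using False by (simp add: field_simps)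
  qed simp
  \<comment> \<open>\<open>v\<close> minimises the Rayleigh quotient; testing with \<open>v - t z\<close> forces the residual \<open>z\<close> to vanish.\<close>
  define z where "z = A *v v - \<mu> *\<^sub>R v"
  define r where "r = z \<bullet> (A *v z) - \<mu> * (z \<bullet> z)"
  have sym_vz: "v \<bullet> (A *v z) = z \<bullet> (A *v v)" using sym[of z v] by (simp add: inner_commute)
  have "z \<bullet> z = 0"
  proof (rule eq_0_if_abs_le_linear)
    show "(0::real) < 1" by simp
    fix t :: real assume t: "0 < t" "t < 1"
    have "0 \<le> (v - t *\<^sub>R z) \<bullet> (A *v (v - t *\<^sub>R z)) - \<mu> * ((v - t *\<^sub>R z) \<bullet> (v - t *\<^sub>R z))"
      using rayleigh[of "v - t *\<^sub>R z"] by simp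
    also have "\<dots> = (v \<bullet> (A *v v) - \<mu> * (v \<bullet> v)) - 2 * t * (z \<bullet> (A *v v - \<mu> *\<^sub>R v)) + t\<^sup>2 * r"
      using sym_vz by (simp add: r_def matrix_vector_mult_diff_distrib matrix_vector_mult_scaleR
          inner_diff_left inner_diff_right inner_commute[of v z] power2_eq_square algebra_simps)
    also have "\<dots> = t\<^sup>2 * r - 2 * t * (z \<bullet> z)"
      using v by (simp add: \<mu>_def z_def flip: power2_norm_eq_inner)
    finally have "2 * t * (z \<bullet> z) \<le> t * (t * r)" by (simp add: power2_eq_square)
    then show "\<bar>z \<bullet> z\<bar> \<le> t * (r / 2)" using t by simp
  qed
  then show ?thesis
    using v by (intro exI[of _ v] exI[of _ \<mu>]) (auto simp: z_def)
qed

lemma lambda_min_ge_if_quadratic_form_ge: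
  fixes A :: "real^'n^'n"
  assumes sym: "\<And>a b. (A *v a) \<bullet> b = a \<bullet> (A *v b)"
    and quad: "\<And>v. - e * (v \<bullet> v) \<le> v \<bullet> (A *v v)"
  shows "- e \<le> lambda_min A"
  unfolding lambda_min_def
proof (rule cInf_greatest)
  show "{l. \<exists>v. v \<noteq> 0 \<and> A *v v = l *\<^sub>R v} \<noteq> {}"
    using symmetric_matrix_has_eigenvector[OF sym] by blast
  fix l assume "l \<in> {l. \<exists>v. v \<noteq> 0 \<and> A *v v = l *\<^sub>R v}"
  then obtain v where "v \<noteq> 0" "A *v v = l *\<^sub>R v" by blast
  then have "- e * (v \<bullet> v) \<le> l * (v \<bullet> v)" "0 < v \<bullet> v"
    using quad[of v] by auto
  then show "- e \<le> l" by (rule mult_right_le_imp_le)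
qed

lemma linear_term_eq_0_if_nonneg_near_0:
  fixes G :: "'a::real_inner"
  assumes "0 < \<delta>" and nonneg: "\<And>t. norm t \<le> \<delta> \<Longrightarrow> 0 \<le> G \<bullet> t + Q t"
    and homog: "\<And>\<tau> t. Q (\<tau> *\<^sub>R t) = \<tau>\<^sup>2 * Q t"
  shows "G = 0"
proof (rule ccontr)
  assume "G \<noteq> 0"
  have "G \<bullet> G = 0"
  proof (rule eq_0_if_abs_le_linear)
    show "0 < \<delta> / norm G" using \<open>0 < \<delta>\<close> \<open>G \<noteq> 0\<close> by simp
    fix \<tau> assume \<tau>: "0 < \<tau>" "\<tau> < \<delta> / norm G"
    have "norm (- \<tau> *\<^sub>R G) \<le> \<delta>" using \<tau> \<open>G \<noteq> 0\<close> by (simp add: field_simps)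
    from nonneg[OF this] have "\<tau> * (G \<bullet> G) \<le> \<tau> * (\<tau> * Q G)"
      using homog[of "- \<tau>" G] by (simp add: power2_eq_square)
    then show "\<bar>G \<bullet> G\<bar> \<le> \<tau> * Q G" using \<tau> by simp
  qed
  with \<open>G \<noteq> 0\<close> show False by simp
qed

lemma homogeneous_nonneg_if_nonneg_near_0:
  fixes Q :: "'a::real_normed_vector \<Rightarrow> real"
  assumes "0 < \<delta>" and nonneg: "\<And>t. norm t \<le> \<delta> \<Longrightarrow> 0 \<le> Q t"
    and homog: "\<And>\<tau> t. Q (\<tau> *\<^sub>R t) = \<tau>\<^sup>2 * Q t"
  shows "0 \<le> Q v"
proof (cases "v = 0")
  case True
  then show ?thesis using nonneg[of 0] \<open>0 < \<delta>\<close> by simp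
next
  case False
  have "0 \<le> Q ((\<delta> / norm v) *\<^sub>R v)" using nonneg \<open>0 < \<delta>\<close> False by simp
  then show ?thesis using \<open>0 < \<delta>\<close> False by (simp add: homog zero_le_mult_iff)
qed

lemma stationary_if_zero_step_optimal:
  fixes f :: "real^'n \<Rightarrow> real" and g :: "real^'n \<Rightarrow> real^'n" and H :: "real^'n \<Rightarrow> real^'n^'n"
  assumes "open D" and "y \<in> D"
    and grad: "\<And>z. z \<in> D \<Longrightarrow> (f has_derivative (\<lambda>h. g z \<bullet> h)) (at z)"
    and hess: "\<And>z. z \<in> D \<Longrightarrow> (g has_derivative (\<lambda>h. H z *v h)) (at z)"
    and H_lip: "\<And>z w. z \<in> D \<Longrightarrow> w \<in> D \<Longrightarrow> onorm (\<lambda>v. (H z - H w) *v v) \<le> LH * norm (z - w)"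
    and "0 \<le> LH" and "0 \<le> eg" and "0 < \<delta>"
    and opt: "\<And>t. norm t \<le> \<delta> \<Longrightarrow>
      tr_model f g H y y \<le> tr_model f g H y (y + t) + (1/2) * eH * (norm t)\<^sup>2"
  shows "stationary g H eg eH y"
proof -
  define Q where "Q t = 1/2 * (t \<bullet> (H y *v t)) + 1/2 * eH * (norm t)\<^sup>2" for t
  have homog: "Q (\<tau> *\<^sub>R t) = \<tau>\<^sup>2 * Q t" for \<tau> t
    by (simp add: Q_def matrix_vector_mult_scaleR power_mult_distrib power2_eq_square algebra_simps)
  have model: "0 \<le> g y \<bullet> t + Q t" if "norm t \<le> \<delta>" for t
    using opt[OF that] by (simp add: Q_def tr_model_def)
  have "g y = 0"
    using linear_term_eq_0_if_nonneg_near_0[OF \<open>0 < \<delta>\<close> model homog] .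
  then have Q_nonneg: "0 \<le> Q v" for v
    using homogeneous_nonneg_if_nonneg_near_0[OF \<open>0 < \<delta>\<close> _ homog] model by simp
  have "- eH * (v \<bullet> v) \<le> v \<bullet> (H y *v v)" for v
    using Q_nonneg[of v] by (simp add: Q_def power2_norm_eq_inner algebra_simps)
  moreover have "(H y *v a) \<bullet> b = a \<bullet> (H y *v b)" for a b
    by (rule hessian_symmetric[OF assms(1-6)])
  ultimately have "- eH \<le> lambda_min (H y)"
    by (intro lambda_min_ge_if_quadratic_form_ge)
  with \<open>g y = 0\<close> \<open>0 \<le> eg\<close> show ?thesis by (simp add: stationary_def)
qed

lemma tr_model_decrease_ge:
  assumes "0 \<le> \<delta>"
    and opt: "\<And>t. norm t \<le> \<delta> \<Longrightarrow>
      tr_model f g H y (y + s) + (1/2) * eH * (norm s)\<^sup>2 \<le> tr_model f g H y (y + t) + (1/2) * eH * (norm t)\<^sup>2"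
  shows "eH / 2 * (norm s)\<^sup>2 \<le> tr_model f g H y y - tr_model f g H y (y + s)"
  using opt[of 0] \<open>0 \<le> \<delta>\<close> by (simp add: tr_model_def)

lemma tr_ratio_ge_if_step_small:
  assumes decrease: "eH / 2 * (norm s)\<^sup>2 \<le> tr_model f g H y y - tr_model f g H y (y + s)"
    and taylor: "\<bar>f (y + s) - f y - g y \<bullet> s - 1/2 * (s \<bullet> (H y *v s))\<bar> \<le> LH / 6 * norm s ^ 3"
    and "0 < eH" "0 < LH" "\<eta> \<le> 1" "s \<noteq> 0"
    and small: "norm s \<le> 3 * (1 - \<eta>) * eH / LH"
  shows "\<eta> \<le> (f y - f (y + s)) / (tr_model f g H y y - tr_model f g H y (y + s))"
proof -
  define pred where "pred = tr_model f g H y y - tr_model f g H y (y + s)"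
  have "0 < eH / 2 * (norm s)\<^sup>2" using \<open>0 < eH\<close> \<open>s \<noteq> 0\<close> by simp
  with decrease have pred_pos: "0 < pred" by (simp add: pred_def)
  have "pred = - (g y \<bullet> s) - 1/2 * (s \<bullet> (H y *v s))" by (simp add: pred_def tr_model_def)
  with taylor have actual: "pred - LH / 6 * norm s ^ 3 \<le> f y - f (y + s)"
    unfolding abs_le_iff by linarith
  have "LH / 6 * norm s ^ 3 = (LH / 6 * norm s) * (norm s)\<^sup>2"
    by (simp add: power3_eq_cube power2_eq_square)
  also have "\<dots> \<le> ((1 - \<eta>) * eH / 2) * (norm s)\<^sup>2"
    using small \<open>0 < LH\<close> by (intro mult_right_mono) (auto simp: field_simps)
  also have "\<dots> = (1 - \<eta>) * (eH / 2 * (norm s)\<^sup>2)" by simp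
  also have "\<dots> \<le> (1 - \<eta>) * pred"
    using decrease \<open>\<eta> \<le> 1\<close> by (intro mult_left_mono) (auto simp: pred_def)
  finally have "\<eta> * pred \<le> f y - f (y + s)"
    using actual by (simp add: algebra_simps)
  with pred_pos show ?thesis by (simp add: pred_def pos_le_divide_eq)
qed

lemma card_le_mult_card_if_successor_within:
  fixes S U :: "nat set"
  assumes "finite S" and succ: "\<And>u. u \<in> U \<Longrightarrow> \<exists>j\<in>S. u < j \<and> j \<le> u + N"
  shows "finite U" and "card U \<le> N * card S"
proof -
  have cover: "U \<subseteq> (\<Union>j\<in>S. {j - N..<j})"
    using succ by fastforce
  then show "finite U"
    using \<open>finite S\<close> by (rule finite_subset[OF _ finite_UN_I]) simp
  have "card U \<le> card (\<Union>j\<in>S. {j - N..<j})"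
    using cover \<open>finite S\<close> by (intro card_mono) auto
  also have "\<dots> \<le> (\<Sum>j\<in>S. card {j - N..<j})"
    by (rule card_UN_le[OF \<open>finite S\<close>])
  also have "\<dots> \<le> (\<Sum>j\<in>S. N)"
    by (intro sum_mono) simp
  finally show "card U \<le> N * card S" by (simp add: mult.commute)
qed

lemma successor_within_if_radius_contracts:
  fixes \<delta> :: "nat \<Rightarrow> real" and S U :: "nat set"
  assumes U_step: "\<And>k. k \<in> U \<Longrightarrow> Suc k \<in> S \<union> U \<and> \<delta> (Suc k) \<le> \<gamma> * \<delta> k"
    and U_large: "\<And>k. k \<in> U \<Longrightarrow> r < \<delta> k"
    and "0 \<le> \<gamma>" and "\<gamma> ^ N * \<delta> u \<le> r" and "u \<in> U"
  shows "\<exists>j\<in>S. u < j \<and> j \<le> u + N"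
proof (rule ccontr)
  assume none: "\<not> ?thesis"
  have "u + i \<in> U \<and> \<delta> (u + i) \<le> \<gamma> ^ i * \<delta> u" if "i \<le> N" for i
    using that
  proof (induction i)
    case 0
    then show ?case using \<open>u \<in> U\<close> by simp
  next
    case (Suc i)
    then have "u + i \<in> U" and \<delta>_i: "\<delta> (u + i) \<le> \<gamma> ^ i * \<delta> u" by auto
    with U_step have "Suc (u + i) \<in> S \<union> U" "\<delta> (Suc (u + i)) \<le> \<gamma> * \<delta> (u + i)" by auto
    moreover have "Suc (u + i) \<notin> S" using none Suc.prems by auto
    moreover have "\<gamma> * \<delta> (u + i) \<le> \<gamma> * (\<gamma> ^ i * \<delta> u)"
      using \<delta>_i \<open>0 \<le> \<gamma>\<close> by (rule mult_left_mono)
    ultimately show ?case by simp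
  qed
  then have "r < \<gamma> ^ N * \<delta> u"
    using U_large by fastforce
  with \<open>\<gamma> ^ N * \<delta> u \<le> r\<close> show False by simp
qed

lemma power_nat_floor_log_less:
  fixes \<gamma> a :: real
  assumes "0 < \<gamma>" "\<gamma> < 1" "0 < a"
  shows "\<gamma> ^ nat \<lfloor>1 + log \<gamma> a\<rfloor> < a"
proof -
  have "log \<gamma> a < real_of_int \<lfloor>1 + log \<gamma> a\<rfloor>"
    using real_of_int_floor_gt_diff_one[of "1 + log \<gamma> a"] by simp
  also have "\<dots> \<le> real (nat \<lfloor>1 + log \<gamma> a\<rfloor>)" by simp
  finally have "\<gamma> powr real (nat \<lfloor>1 + log \<gamma> a\<rfloor>) < \<gamma> powr log \<gamma> a"
    by (rule powr_less_mono'[OF assms(1,2)])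
  then show ?thesis using assms by (simp add: powr_realpow)
qed

locale exact_trust_region_run =
  fixes f :: "real^'n \<Rightarrow> real" and g :: "real^'n \<Rightarrow> real^'n" and H :: "real^'n \<Rightarrow> real^'n^'n"
    and D :: "(real^'n) set" and LH :: real
    and x s :: "nat \<Rightarrow> real^'n" and \<delta> \<rho> :: "nat \<Rightarrow> real"
    and eg eH \<gamma>1 \<gamma>2 \<psi> \<delta>max \<eta> :: real and K S U :: "nat set"
  assumes eg: "0 \<le> eg" and eH: "0 < eH" and \<gamma>1: "0 < \<gamma>1" "\<gamma>1 < 1" and \<gamma>2: "1 \<le> \<gamma>2"
    and \<delta>_0: "0 < \<delta> 0" "\<delta> 0 \<le> \<delta>max" and \<eta>: "\<eta> < 1"
    and K_def: "K = {k. \<forall>j\<le>k. \<not> stationary g H eg eH (x j)}"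
    and sub_feas: "\<And>k. k \<in> K \<Longrightarrow> norm (s k) \<le> \<delta> k"
    and sub_opt: "\<And>k t. k \<in> K \<Longrightarrow> norm t \<le> \<delta> k \<Longrightarrow>
        tr_model f g H (x k) (x k + s k) + (1/2) * eH * (norm (s k))\<^sup>2
          \<le> tr_model f g H (x k) (x k + t) + (1/2) * eH * (norm t)\<^sup>2"
    and rho_def: "\<And>k. k \<in> K \<Longrightarrow> \<rho> k =
        (f (x k) - f (x k + s k)) / (tr_model f g H (x k) (x k) - tr_model f g H (x k) (x k + s k))"
    and succ_step: "\<And>k. k \<in> K \<Longrightarrow> \<rho> k \<ge> \<eta> \<Longrightarrow>
        x (Suc k) = x k + s k \<and>
        \<delta> (Suc k) = (if norm (s k) \<ge> \<psi> * \<delta> k then min (\<gamma>2 * \<delta> k) \<delta>max else \<delta> k)"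
    and unsucc_step: "\<And>k. k \<in> K \<Longrightarrow> \<rho> k < \<eta> \<Longrightarrow>
        x (Suc k) = x k \<and> \<delta> (Suc k) = \<gamma>1 * norm (s k)"
    and S_def: "S = {k \<in> K. \<rho> k \<ge> \<eta>}"
    and U_def: "U = {k \<in> K. \<rho> k < \<eta>}"
    and D_open: "open D"
    and segs: "\<And>k. k \<in> K \<Longrightarrow> closed_segment (x k) (x k + s k) \<subseteq> D"
    and grad: "\<And>y. y \<in> D \<Longrightarrow> (f has_derivative (\<lambda>h. g y \<bullet> h)) (at y)"
    and hess: "\<And>y. y \<in> D \<Longrightarrow> (g has_derivative (\<lambda>h. H y *v h)) (at y)"
    and LH: "0 < LH" and H_lip: "\<And>y z. y \<in> D \<Longrightarrow> z \<in> D \<Longrightarrow>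
        onorm (\<lambda>v. (H y - H z) *v v) \<le> LH * norm (y - z)"
begin

abbreviation step_threshold :: real where
  "step_threshold \<equiv> 3 * (1 - \<eta>) * eH / LH"

abbreviation unsuccessful_run_bound :: int where
  "unsuccessful_run_bound \<equiv> \<lfloor>1 + log \<gamma>1 (step_threshold / \<delta>max)\<rfloor>"

lemma unsuccessful_step_norm_gt:
  assumes "k \<in> U" and "0 < \<delta> k"
  shows "step_threshold < norm (s k)"
proof -
  from \<open>k \<in> U\<close> have k: "k \<in> K" and "\<rho> k < \<eta>" by (auto simp: U_def)
  have "x k \<in> D" using segs[OF k] by auto
  have "s k \<noteq> 0"
  proof
    assume "s k = 0"
    with sub_opt[OF k] have "stationary g H eg eH (x k)"
      by (intro stationary_if_zero_step_optimal[OF D_open \<open>x k \<in> D\<close> grad hess H_lip _ eg \<open>0 < \<delta> k\<close>])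
        (use LH in auto)
    with k show False by (auto simp: K_def)
  qed
  have "0 \<le> \<delta> k" using \<open>0 < \<delta> k\<close> by simp
  show ?thesis
  proof (rule ccontr)
    assume "\<not> ?thesis"
    with \<open>s k \<noteq> 0\<close> have "\<eta> \<le> \<rho> k"
      unfolding rho_def[OF k] using \<eta> eH LH
      by (intro tr_ratio_ge_if_step_small[OF tr_model_decrease_ge[OF \<open>0 \<le> \<delta> k\<close> sub_opt[OF k]]
            hessian_lipschitz_taylor_bound[OF segs[OF k] grad hess H_lip]]) auto
    with \<open>\<rho> k < \<eta>\<close> show False by simp
  qed
qed

lemma radius_pos_le_max:
  assumes "k \<in> K"
  shows "0 < \<delta> k \<and> \<delta> k \<le> \<delta>max"
  using assms
proof (induction k)
  case 0
  then show ?case using \<delta>_0 by simp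
next
  case (Suc k)
  then have k: "k \<in> K" by (auto simp: K_def)
  with Suc.IH have \<delta>_k: "0 < \<delta> k" "\<delta> k \<le> \<delta>max" by auto
  show ?case
  proof (cases "\<eta> \<le> \<rho> k")
    case True
    then show ?thesis using succ_step[OF k True] \<delta>_k \<gamma>2 by auto
  next
    case False
    with k have "k \<in> U" by (simp add: U_def)
    have "0 < step_threshold" using \<eta> eH LH by simp
    with unsuccessful_step_norm_gt[OF \<open>k \<in> U\<close> \<delta>_k(1)] have "0 < norm (s k)" by linarith
    moreover have "\<gamma>1 * norm (s k) \<le> \<delta> k"
      using mult_left_le_one_le[of "norm (s k)" \<gamma>1] sub_feas[OF k] \<gamma>1 by simp
    ultimately show ?thesis using unsucc_step[OF k] False \<delta>_k \<gamma>1 by auto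
  qed
qed

lemma unsuccessful_step_contracts:
  assumes "k \<in> U"
  shows "Suc k \<in> S \<union> U \<and> \<delta> (Suc k) \<le> \<gamma>1 * \<delta> k"
proof -
  from assms have k: "k \<in> K" and "\<rho> k < \<eta>" by (auto simp: U_def)
  with unsucc_step have "x (Suc k) = x k" and \<delta>_Suc: "\<delta> (Suc k) = \<gamma>1 * norm (s k)" by auto
  with k have "Suc k \<in> K" by (auto simp: K_def le_Suc_eq)
  moreover have "\<gamma>1 * norm (s k) \<le> \<gamma>1 * \<delta> k"
    using sub_feas[OF k] \<gamma>1 by simp
  ultimately show ?thesis using \<delta>_Suc by (auto simp: S_def U_def)
qed

lemma successful_within_after_unsuccessful:
  assumes "u \<in> U"
  shows "\<exists>j\<in>S. u < j \<and> j \<le> u + nat unsuccessful_run_bound"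
proof (rule successor_within_if_radius_contracts[OF unsuccessful_step_contracts _ _ _ assms])
  show "step_threshold < \<delta> k" if "k \<in> U" for k
  proof -
    from \<open>k \<in> U\<close> have "k \<in> K" by (simp add: U_def)
    with radius_pos_le_max have "0 < \<delta> k" by blast
    with unsuccessful_step_norm_gt[OF \<open>k \<in> U\<close>] sub_feas[OF \<open>k \<in> K\<close>] show ?thesis by linarith
  qed
  show "0 \<le> \<gamma>1" using \<gamma>1 by simp
  define N where "N = nat unsuccessful_run_bound"
  from assms have \<delta>_u: "0 < \<delta> u" "\<delta> u \<le> \<delta>max" using radius_pos_le_max by (auto simp: U_def)
  have "\<gamma>1 ^ N * \<delta> u \<le> \<gamma>1 ^ N * \<delta>max"
    using \<delta>_u \<gamma>1 by (intro mult_left_mono) auto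
  also have "\<dots> < step_threshold"
  proof -
    have "\<gamma>1 ^ N < step_threshold / \<delta>max"
      unfolding N_def using \<gamma>1 \<eta> eH LH \<delta>_u by (intro power_nat_floor_log_less) auto
    moreover have "0 < \<delta>max" using \<delta>_u by simp
    ultimately show ?thesis by (simp only: pos_less_divide_eq)
  qed
  finally show "\<gamma>1 ^ N * \<delta> u \<le> step_threshold" by simp
qed

theorem card_unsuccessful_le:
  "U = {} \<or> infinite S \<or>
    (finite U \<and> real (card U) \<le> real_of_int unsuccessful_run_bound * real (card S))"
proof (cases "finite S \<and> U \<noteq> {}")
  case True
  then have "finite U" and card: "card U \<le> nat unsuccessful_run_bound * card S"
    using card_le_mult_card_if_successor_within[OF _ successful_within_after_unsuccessful] by auto
  moreover from \<open>finite U\<close> True have "0 < card U" by (simp add: card_gt_0_iff)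
  ultimately have "0 < nat unsuccessful_run_bound" by (metis gr0I le_zero_eq mult_is_0)
  then have "real (card U) \<le> real_of_int unsuccessful_run_bound * real (card S)"
    using of_nat_mono[OF card, where 'a=real] by simp
  with \<open>finite U\<close> show ?thesis by blast
qed auto

end

theorem lemma2p5:
  fixes f :: "real^'n \<Rightarrow> real"
    and g :: "real^'n \<Rightarrow> real^'n"
    and H :: "real^'n \<Rightarrow> real^'n^'n"
    and x s :: "nat \<Rightarrow> real^'n"
    and \<delta> \<rho> :: "nat \<Rightarrow> real"
    and eg eH \<gamma>1 \<gamma>2 \<psi> \<delta>0 \<delta>max \<eta> Lg LH flow :: real
    and D :: "(real^'n) set"
    and K S U :: "nat set"
  assumes eg: "eg > 0" and eH: "eH > 0"
    and g1: "0 < \<gamma>1" "\<gamma>1 < 1"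
    and g2: "\<gamma>2 \<ge> 1"
    and psi: "1 / \<gamma>2 < \<psi>" "\<psi> \<le> 1"
    and d0: "\<delta>0 > 0" and dmax: "\<delta>max \<ge> \<delta>0"
    and eta: "0 < \<eta>" "\<eta> < 1"
    and x0_delta0: "\<delta> 0 = \<delta>0"
    (* iterations completed without termination *)
    and K_def: "K = {k. \<forall>j\<le>k. \<not> stationary g H eg eH (x j)}"
    (* trust-region subproblem: s_k is a global minimiser *)
    and sub_feas: "\<And>k. k \<in> K \<Longrightarrow> norm (s k) \<le> \<delta> k"
    and sub_opt: "\<And>k t. k \<in> K \<Longrightarrow> norm t \<le> \<delta> k \<Longrightarrow>
        tr_model f g H (x k) (x k + s k) + (1/2) * eH * (norm (s k))\<^sup>2
          \<le> tr_model f g H (x k) (x k + t) + (1/2) * eH * (norm t)\<^sup>2"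
    and rho_def: "\<And>k. k \<in> K \<Longrightarrow> \<rho> k =
        (f (x k) - f (x k + s k)) / (tr_model f g H (x k) (x k) - tr_model f g H (x k) (x k + s k))"
    and succ_step: "\<And>k. k \<in> K \<Longrightarrow> \<rho> k \<ge> \<eta> \<Longrightarrow>
        x (Suc k) = x k + s k \<and>
        \<delta> (Suc k) = (if norm (s k) \<ge> \<psi> * \<delta> k then min (\<gamma>2 * \<delta> k) \<delta>max else \<delta> k)"
    and unsucc_step: "\<And>k. k \<in> K \<Longrightarrow> \<rho> k < \<eta> \<Longrightarrow>
        x (Suc k) = x k \<and> \<delta> (Suc k) = \<gamma>1 * norm (s k)"
    and S_def: "S = {k \<in> K. \<rho> k \<ge> \<eta>}"
    and U_def: "U = {k \<in> K. \<rho> k < \<eta>}"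
    (* standing assumption *)
    and f_low: "\<And>k. k \<in> K \<Longrightarrow> f (x k) \<ge> flow"
    and D_open: "open D"
    and segs: "\<And>k. k \<in> K \<Longrightarrow> closed_segment (x k) (x k + s k) \<subseteq> D"
    and grad: "\<And>y. y \<in> D \<Longrightarrow> (f has_derivative (\<lambda>h. g y \<bullet> h)) (at y)"
    and hess: "\<And>y. y \<in> D \<Longrightarrow> (g has_derivative (\<lambda>h. H y *v h)) (at y)"
    and Hcont: "continuous_on D H"
    and Lg: "Lg > 0" and g_lip: "\<And>y z. y \<in> D \<Longrightarrow> z \<in> D \<Longrightarrow> norm (g y - g z) \<le> Lg * norm (y - z)"
    and LH: "LH > 0" and H_lip: "\<And>y z. y \<in> D \<Longrightarrow> z \<in> D \<Longrightarrow>
        onorm (\<lambda>v. (H y - H z) *v v) \<le> LH * norm (y - z)"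
  shows "U = {} \<or> infinite S \<or>
    (finite U \<and> real (card U) \<le>
       real_of_int \<lfloor>1 + log \<gamma>1 (3 * (1 - \<eta>) / (LH * \<delta>max)) + log \<gamma>1 eH\<rfloor> * real (card S))"
proof -
  interpret exact_trust_region_run f g H D LH x s \<delta> \<rho> eg eH \<gamma>1 \<gamma>2 \<psi> \<delta>max \<eta> K S U
    by (unfold_locales; (rule assms)?) (use assms in auto)
  have "log \<gamma>1 (3 * (1 - \<eta>) / (LH * \<delta>max)) + log \<gamma>1 eH
      = log \<gamma>1 (3 * (1 - \<eta>) / (LH * \<delta>max) * eH)"
    using g1 eta LH eH d0 dmax by (subst log_mult) auto
  also have "3 * (1 - \<eta>) / (LH * \<delta>max) * eH = 3 * (1 - \<eta>) * eH / LH / \<delta>max"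
    by simp
  finally show ?thesis
    using card_unsuccessful_le by (simp add: add.assoc)
qed

end
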